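(* For any $\varepsilon\in(0,1)$ there exists an infinite $\varepsilon$-synchronization string over an alphabet of size $\Theta(1/\varepsilon^4)$, i.e., an infinite sequence $S=s_1s_2s_3\cdots$ over such an alphabet with $\mathrm{ED}(S[i,j),S[j,k))>(1-\varepsilon)(k-i)$ for all positive integers $i<j<k$.
   Context: $\mathrm{ED}$ is the minimum number of insertions and deletions transforming one string into another. $S[i,j)$ denotes the consecutive substring $s_i s_{i+1}\cdots s_{j-1}$. *)

theory Defs
  imports Complex_Main
begin

definition indel_step :: "'a list \<Rightarrow> 'a list \<Rightarrow> bool" where
  "indel_step xs ys \<longleftrightarrow>
     (\<exists>us vs a. xs = us @ a # vs \<and> ys = us @ vs) \<or>
     (\<exists>us vs a. xs = us @ vs \<and> ys = us @ a # vs)"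

definition ED :: "'a list \<Rightarrow> 'a list \<Rightarrow> nat" where
  "ED xs ys = (LEAST n. (indel_step ^^ n) xs ys)"

text \<open>S[i,j) = s_i ... s_{j-1} for an infinite string S = s_1 s_2 ... (index 0 unused).\<close>
definition substr :: "(nat \<Rightarrow> 'a) \<Rightarrow> nat \<Rightarrow> nat \<Rightarrow> 'a list" where
  "substr S i j = map S [i..<j]"

end

theory Submission
  imports Defs "HOL-Library.Sublist"
begin

text \<open>Let \<open>r = \<lceil>1/\<epsilon>\<rceil>\<close> and \<open>q = 512 r\<^sup>4\<close>. If \<open>ED(x, y) \<le> (1 - \<epsilon>)(|x| + |y|)\<close>, then
  \<open>x\<close> and \<open>y\<close> have a common subsequence of length at least \<open>L = \<lceil>m/(2r)\<rceil>\<close>, \<open>m = |x| + |y|\<close>,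
  so the word \<open>xy\<close> is bad: it has \<open>2L\<close> positions whose first half spells the same word as the
  second half. A bad word of length \<open>m\<close> is determined by these positions and its letters outside
  the second half, so there are at most \<open>C(m, 2L) q\<^bsup>m - L\<^esup>\<close> of them. For this \<open>q\<close> the
  number of words of length \<open>n\<close> without bad factors grows by the factor \<open>q (1 - 1/(4r))\<close> with
  each letter: of the \<open>q\<close> one-letter extensions, only those ending in a bad word are lost, and
  they are few by induction. Hence such words exist for every length, and K\<ouml>nig's lemma yields
  an infinite sequence all of whose prefixes are free of bad factors.\<close>

section \<open>Edit distance and common subsequences\<close>

lemma indel_steps_to_Nil: "(indel_step ^^ length xs) xs []"
proof (induction xs)
  case (Cons a xs)
  have "indel_step (a # xs) xs" unfolding indel_step_def by (metis append_Nil)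
  with Cons show ?case using relpowp_Suc_I2 by fastforce
qed simp

lemma indel_steps_from_Nil: "(indel_step ^^ length ys) [] ys"
proof (induction ys)
  case (Cons a ys)
  have "indel_step ys (a # ys)" unfolding indel_step_def by (metis append_Nil)
  with Cons show ?case using relpowp_Suc_I by fastforce
qed simp

lemma indel_steps_ED: "(indel_step ^^ ED xs ys) xs ys"
proof -
  have "(indel_step ^^ (length xs + length ys)) xs ys"
    using indel_steps_to_Nil[of xs] indel_steps_from_Nil[of ys] by (auto simp: relpowp_add)
  then show ?thesis unfolding ED_def by (rule LeastI)
qed

lemma subseq_delete_elem:
  "subseq zs (us @ a # vs) \<Longrightarrow>
     \<exists>zs'. subseq zs' zs \<and> subseq zs' (us @ vs) \<and> length zs \<le> length zs' + 1"
proof (induction us arbitrary: zs)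
  case Nil
  show ?case
  proof (cases "subseq zs vs")
    case False
    with Nil obtain zs' where "zs = a # zs'" "subseq zs' vs"
      by (cases zs) (auto split: if_splits)
    then show ?thesis by (intro exI[of _ zs']) auto
  qed auto
next
  case (Cons b us)
  show ?case
  proof (cases "subseq zs (us @ a # vs)")
    case True
    then show ?thesis using Cons.IH by fastforce
  next
    case False
    with Cons.prems obtain zs'' where zs: "zs = b # zs''" "subseq zs'' (us @ a # vs)"
      by (cases zs) (auto split: if_splits)
    from Cons.IH[OF zs(2)] obtain zs' where
      "subseq zs' zs''" "subseq zs' (us @ vs)" "length zs'' \<le> length zs' + 1" by blast
    with zs show ?thesis by (intro exI[of _ "b # zs'"]) auto
  qed
qed

text \<open>A deletion keeps every common subsequence, an insertion shortens it by at most one.\<close>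

lemma indel_steps_common_subseq:
  "(indel_step ^^ d) xs ys \<Longrightarrow>
     \<exists>zs. subseq zs xs \<and> subseq zs ys \<and> length xs + length ys \<le> d + 2 * length zs"
proof (induction d arbitrary: xs)
  case 0
  then show ?case by (intro exI[of _ xs]) auto
next
  case (Suc d)
  obtain ws where ws: "indel_step xs ws" "(indel_step ^^ d) ws ys"
    using relpowp_Suc_D2[OF Suc.prems] by blast
  obtain zs where zs: "subseq zs ws" "subseq zs ys" "length ws + length ys \<le> d + 2 * length zs"
    using Suc.IH[OF ws(2)] by blast
  from ws(1) show ?case unfolding indel_step_def
  proof (elim disjE exE conjE)
    fix us vs a assume del: "xs = us @ a # vs" "ws = us @ vs"
    then have "subseq ws xs" by (auto intro: list_emb_append_mono)
    with zs del show ?thesis by (intro exI[of _ zs]) (auto intro: subseq_order.trans)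
  next
    fix us vs a assume ins: "xs = us @ vs" "ws = us @ a # vs"
    with zs obtain zs' where "subseq zs' zs" "subseq zs' xs" "length zs \<le> length zs' + 1"
      using subseq_delete_elem[of zs us a vs] by auto
    with zs ins show ?thesis by (intro exI[of _ zs']) (auto intro: subseq_order.trans)
  qed
qed

corollary ED_common_subseq:
  "\<exists>zs. subseq zs xs \<and> subseq zs ys \<and> length xs + length ys \<le> ED xs ys + 2 * length zs"
  using indel_steps_common_subseq[OF indel_steps_ED] .

section \<open>Repeats\<close>

definition repeats_on :: "'a list \<Rightarrow> nat set \<Rightarrow> nat \<Rightarrow> bool" where
  "repeats_on v P l \<longleftrightarrow>
     (\<forall>t<l. v ! (sorted_list_of_set P ! t) = v ! (sorted_list_of_set P ! (t + l)))"

definition has_repeat :: "'a list \<Rightarrow> nat \<Rightarrow> bool" where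
  "has_repeat v l \<longleftrightarrow> (\<exists>P \<subseteq> {0..<length v}. card P = 2 * l \<and> repeats_on v P l)"

lemma subseq_index_list:
  "subseq zs xs \<Longrightarrow> \<exists>ixs. length ixs = length zs \<and> sorted_wrt (<) ixs \<and>
     (\<forall>i\<in>set ixs. i < length xs) \<and> (\<forall>t<length zs. xs ! (ixs ! t) = zs ! t)"
proof (induction zs xs rule: list_emb.induct)
  case (list_emb_Nil ys)
  then show ?case by (intro exI[of _ "[]"]) auto
next
  case (list_emb_Cons xs ys y)
  then obtain ixs where "length ixs = length xs" "sorted_wrt (<) ixs" "\<forall>i\<in>set ixs. i < length ys"
     "\<forall>t<length xs. ys ! (ixs ! t) = xs ! t" by blast
  then show ?case by (intro exI[of _ "map Suc ixs"]) (auto simp: sorted_wrt_map)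
next
  case (list_emb_Cons2 x y xs ys)
  then obtain ixs where "length ixs = length xs" "sorted_wrt (<) ixs" "\<forall>i\<in>set ixs. i < length ys"
     "\<forall>t<length xs. ys ! (ixs ! t) = xs ! t" by blast
  with list_emb_Cons2 show ?case by (intro exI[of _ "0 # map Suc ixs"])
      (auto simp: sorted_wrt_map nth_Cons split: nat.splits)
qed

lemma common_subseq_has_repeat:
  assumes zx: "subseq zs xs" and zy: "subseq zs ys" and l: "l \<le> length zs"
  shows "has_repeat (xs @ ys) l"
proof -
  obtain ixs where ix: "length ixs = length zs" "sorted_wrt (<) ixs" "\<forall>i\<in>set ixs. i < length xs"
     "\<forall>t<length zs. xs ! (ixs ! t) = zs ! t" using subseq_index_list[OF zx] by blast
  obtain jxs where jx: "length jxs = length zs" "sorted_wrt (<) jxs" "\<forall>i\<in>set jxs. i < length ys"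
     "\<forall>t<length zs. ys ! (jxs ! t) = zs ! t" using subseq_index_list[OF zy] by blast
  define ps where "ps = take l ixs @ map (\<lambda>j. j + length xs) (take l jxs)"
  have sorted_ps: "sorted_wrt (<) ps" unfolding ps_def using ix jx
    by (auto simp: sorted_wrt_append sorted_wrt_map sorted_wrt_take dest!: in_set_takeD)
  then have sorted_list_ps: "sorted_list_of_set (set ps) = ps"
    by (simp add: sorted_list_of_set.idem_if_sorted_distinct strict_sorted_iff)
  have "card (set ps) = length ps"
    using sorted_ps by (simp add: distinct_card strict_sorted_iff)
  also have "\<dots> = 2 * l" using ix jx l unfolding ps_def by simp
  finally have "card (set ps) = 2 * l" .
  moreover have "set ps \<subseteq> {0..<length (xs @ ys)}" unfolding ps_def using ix jx
    by (force dest!: in_set_takeD)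
  moreover have "repeats_on (xs @ ys) (set ps) l" unfolding repeats_on_def sorted_list_ps
  proof (intro allI impI)
    fix t assume t: "t < l"
    have "ps ! t = ixs ! t" "ps ! (t + l) = jxs ! t + length xs"
      using t ix jx l unfolding ps_def by (simp_all add: nth_append)
    moreover have "ixs ! t < length xs" using ix t l by (metis nth_mem order_less_le_trans)
    ultimately show "(xs @ ys) ! (ps ! t) = (xs @ ys) ! (ps ! (t + l))"
      using ix jx t l by (simp add: nth_append)
  qed
  ultimately show ?thesis unfolding has_repeat_def by blast
qed

lemma repeats_on_determined:
  assumes P: "P \<subseteq> {0..<m}" "card P = 2 * l"
    and rep: "repeats_on v P l" "repeats_on v' P l" and len: "length v = m" "length v' = m"
    and agree: "\<And>p. p < m \<Longrightarrow> p \<notin> set (drop l (sorted_list_of_set P)) \<Longrightarrow> v ! p = v' ! p"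
  shows "v = v'"
proof -
  let ?ps = "sorted_list_of_set P"
  have fin: "finite P" using P(1) by (rule finite_subset) simp
  have ps: "length ?ps = 2 * l" "sorted_wrt (<) ?ps" using P(2) fin by simp_all
  have "v ! p = v' ! p" if "p < m" for p
    using that
  proof (induction p rule: less_induct)
    case (less p)
    show ?case
    proof (cases "p \<in> set (drop l ?ps)")
      case True
      then obtain t where t: "t < l" "p = ?ps ! (t + l)"
        using ps(1) by (auto simp: in_set_conv_nth add.commute)
      have earlier: "?ps ! t < p"
        using sorted_wrt_nth_less[OF ps(2), of t "t + l"] t ps(1) by simp
      have "v ! p = v ! (?ps ! t)" using rep(1) t unfolding repeats_on_def by simp
      also have "\<dots> = v' ! (?ps ! t)" using less earlier by simp
      also have "\<dots> = v' ! p" using rep(2) t unfolding repeats_on_def by simp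
      finally show ?thesis .
    next
      case False
      then show ?thesis by (rule agree[OF less.prems])
    qed
  qed
  with len show ?thesis by (intro nth_equalityI) auto
qed

text \<open>Encode a word with a repeat on \<open>P\<close> by \<open>P\<close> and its letters outside the upper half of \<open>P\<close>.\<close>

lemma card_lists_with_repeat_le:
  fixes A :: "'a set"
  assumes A: "finite A"
  shows "card {v. length v = m \<and> set v \<subseteq> A \<and> has_repeat v l} \<le> (m choose (2 * l)) * card A ^ (m - l)"
proof -
  define Rep where "Rep = {v. length v = m \<and> set v \<subseteq> A \<and> has_repeat v l}"
  define Keys where "Keys = {P. P \<subseteq> {0..<m} \<and> card P = 2 * l}"
  define key where "key v = (SOME P. P \<in> Keys \<and> repeats_on v P l)" for v :: "'a list"
  define free where "free P = {0..<m} - set (drop l (sorted_list_of_set P))" for P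
  define enc where "enc v = (key v, map ((!) v) (sorted_list_of_set (free (key v))))" for v :: "'a list"
  have key: "key v \<in> Keys \<and> repeats_on v (key v) l" if "v \<in> Rep" for v
  proof -
    have "has_repeat v l" "length v = m" using that unfolding Rep_def by simp_all
    then obtain P where "P \<subseteq> {0..<m}" "card P = 2 * l" "repeats_on v P l"
      unfolding has_repeat_def by blast
    then have "P \<in> Keys \<and> repeats_on v P l" unfolding Keys_def by simp
    then show ?thesis unfolding key_def by (rule someI)
  qed
  have card_free: "card (free P) = m - l" if "P \<in> Keys" for P
  proof -
    have "finite P" using that finite_subset[of P "{0..<m}"] unfolding Keys_def by simp
    then have "card (set (drop l (sorted_list_of_set P))) = l"
      using that by (simp add: distinct_card Keys_def)
    moreover have "set (drop l (sorted_list_of_set P)) \<subseteq> {0..<m}"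
      using set_drop_subset[of l "sorted_list_of_set P"] that \<open>finite P\<close>
      unfolding Keys_def by auto
    ultimately show ?thesis unfolding free_def by (simp add: card_Diff_subset)
  qed
  have enc: "enc v \<in> Keys \<times> {u. set u \<subseteq> A \<and> length u = m - l}" if "v \<in> Rep" for v
  proof -
    have "set (sorted_list_of_set (free (key v))) \<subseteq> {0..<length v}"
      using that unfolding free_def Rep_def by auto
    moreover have "v ! i \<in> A" if "i < length v" for i
      using \<open>v \<in> Rep\<close> nth_mem[OF that] unfolding Rep_def by blast
    ultimately have "set (map ((!) v) (sorted_list_of_set (free (key v)))) \<subseteq> A" by auto
    with key[OF that] card_free[of "key v"] show ?thesis unfolding enc_def by simp
  qed
  have "inj_on enc Rep"
  proof (rule inj_onI)
    fix v v' assume v: "v \<in> Rep" and v': "v' \<in> Rep" and eq: "enc v = enc v'"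
    then have same_key: "key v' = key v" unfolding enc_def by simp
    have agree: "v ! p = v' ! p" if "p \<in> free (key v)" for p
    proof -
      have "p \<in> set (sorted_list_of_set (free (key v)))"
        using that unfolding free_def by simp
      then obtain i where "i < length (sorted_list_of_set (free (key v)))"
        "p = sorted_list_of_set (free (key v)) ! i" by (auto simp: in_set_conv_nth)
      then show ?thesis using arg_cong[OF eq, of "\<lambda>e. snd e ! i"]
        unfolding enc_def same_key by simp
    qed
    have "key v \<subseteq> {0..<m}" "card (key v) = 2 * l"
      using key[OF v] unfolding Keys_def by simp_all
    then show "v = v'"
    proof (rule repeats_on_determined)
      show "repeats_on v (key v) l" "repeats_on v' (key v) l"
        using key[OF v] key[OF v'] unfolding same_key by simp_all
      show "length v = m" "length v' = m" using v v' unfolding Rep_def by simp_all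
    qed (simp add: agree free_def)
  qed
  moreover have "finite (Keys \<times> {u. set u \<subseteq> A \<and> length u = m - l})"
    unfolding Keys_def using finite_lists_length_eq[OF A] by simp
  ultimately have "card Rep \<le> card (Keys \<times> {u. set u \<subseteq> A \<and> length u = m - l})"
    using card_inj_on_le image_subsetI[of Rep enc, OF enc] by blast
  also have "\<dots> = (m choose (2 * l)) * card A ^ (m - l)"
    using n_subsets[of "{0..<m}" "2 * l"] card_lists_length_eq[OF A]
    by (simp add: card_cartesian_product Keys_def)
  finally show ?thesis unfolding Rep_def .
qed

section \<open>Words without long repeats\<close>

definition repeat_length :: "nat \<Rightarrow> nat \<Rightarrow> nat" where
  "repeat_length r m = (m + 2 * r - 1) div (2 * r)"

lemma repeat_length_le_iff:
  assumes "0 < r"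
  shows "repeat_length r m \<le> l \<longleftrightarrow> m \<le> 2 * r * l"
proof -
  have "repeat_length r m \<le> l \<longleftrightarrow> m + 2 * r - 1 < Suc l * (2 * r)"
    unfolding repeat_length_def using assms
    by (simp only: less_Suc_eq_le[symmetric] div_less_iff_less_mult)
  also have "\<dots> \<longleftrightarrow> m \<le> 2 * r * l" using assms by (auto simp: algebra_simps)
  finally show ?thesis .
qed

lemma ED_small_imp_has_repeat:
  fixes \<epsilon> :: real
  assumes r: "0 < r" and r\<epsilon>: "1 \<le> real r * \<epsilon>"
    and ED: "real (ED xs ys) \<le> (1 - \<epsilon>) * real (length (xs @ ys))"
  shows "has_repeat (xs @ ys) (repeat_length r (length (xs @ ys)))"
proof -
  obtain zs where zs: "subseq zs xs" "subseq zs ys"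
    and len: "length (xs @ ys) \<le> ED xs ys + 2 * length zs"
    using ED_common_subseq by fastforce
  define n where "n = real (length (xs @ ys))"
  have "n \<le> real (ED xs ys) + 2 * real (length zs)"
    using of_nat_mono[OF len] unfolding n_def by simp
  moreover have "real (ED xs ys) \<le> n - \<epsilon> * n" using ED unfolding n_def by (simp add: algebra_simps)
  ultimately have "\<epsilon> * n \<le> 2 * real (length zs)" by linarith
  then have "real r * (\<epsilon> * n) \<le> real r * (2 * real (length zs))"
    by (intro mult_left_mono) auto
  moreover have "n \<le> real r * \<epsilon> * n" using r\<epsilon> mult_right_mono[of 1 "real r * \<epsilon>" n]
    unfolding n_def by simp
  ultimately have "n \<le> real (2 * r * length zs)" by (simp add: algebra_simps)
  then have "repeat_length r (length (xs @ ys)) \<le> length zs"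
    using repeat_length_le_iff[OF r] unfolding n_def by (simp only: of_nat_le_iff)
  with zs show ?thesis by (rule common_subseq_has_repeat)
qed

definition bad_word :: "nat \<Rightarrow> 'a list \<Rightarrow> bool" where
  "bad_word r v \<longleftrightarrow> has_repeat v (repeat_length r (length v))"

definition good_word :: "nat \<Rightarrow> 'a list \<Rightarrow> bool" where
  "good_word r w \<longleftrightarrow> (\<forall>a c. a < c \<and> c \<le> length w \<longrightarrow> \<not> bad_word r (drop a (take c w)))"

text \<open>The constant makes \<open>32 r\<^sup>2 / q = 1 / (16 r\<^sup>2)\<close> in \<open>binomial_term_le\<close>.\<close>

definition alphabet_size :: "nat \<Rightarrow> nat" where
  "alphabet_size r = 512 * r ^ 4"

definition good_words :: "nat \<Rightarrow> nat \<Rightarrow> nat list set" where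
  "good_words r n = {w. length w = n \<and> set w \<subseteq> {0..<alphabet_size r} \<and> good_word r w}"

definition bad_words :: "nat \<Rightarrow> nat \<Rightarrow> nat list set" where
  "bad_words r m = {v. length v = m \<and> set v \<subseteq> {0..<alphabet_size r} \<and> bad_word r v}"

lemma good_word_take: "good_word r w \<Longrightarrow> good_word r (take n w)"
  unfolding good_word_def by (auto simp: min_def split: if_splits)

lemma finite_good_words: "finite (good_words r n)"
  using finite_lists_length_eq[of "{0..<alphabet_size r}" n]
  by (rule finite_subset[rotated]) (auto simp: good_words_def)

lemma finite_bad_words: "finite (bad_words r m)"
  using finite_lists_length_eq[of "{0..<alphabet_size r}" m]
  by (rule finite_subset[rotated]) (auto simp: bad_words_def)

lemma card_bad_words_le:
  "card (bad_words r m) \<le> (m choose (2 * repeat_length r m)) * alphabet_size r ^ (m - repeat_length r m)"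
proof -
  have "bad_words r m =
      {v. length v = m \<and> set v \<subseteq> {0..<alphabet_size r} \<and> has_repeat v (repeat_length r m)}"
    unfolding bad_words_def bad_word_def by auto
  then show ?thesis using card_lists_with_repeat_le[of "{0..<alphabet_size r}" m] by simp
qed

lemma snoc_good_word:
  assumes w: "w \<in> good_words r n" and x: "x < alphabet_size r"
  shows "w @ [x] \<in> good_words r (Suc n) \<union>
     (\<Union>m\<in>{1..Suc n}. (\<lambda>(u, v). u @ v) ` (good_words r (Suc n - m) \<times> bad_words r m))"
proof (cases "good_word r (w @ [x])")
  case True
  then show ?thesis using w x unfolding good_words_def by auto
next
  case False
  have w': "good_word r w" "length w = n" "set w \<subseteq> {0..<alphabet_size r}"
    using w unfolding good_words_def by auto
  obtain a c where ac: "a < c" "c \<le> Suc n" "bad_word r (drop a (take c (w @ [x])))"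
    using False w'(2) unfolding good_word_def by auto
  have c: "c = Suc n"
  proof (rule ccontr)
    assume "c \<noteq> Suc n"
    with ac w' show False unfolding good_word_def by auto
  qed
  define m where "m = Suc n - a"
  have m: "m \<in> {1..Suc n}" "Suc n - m = a" using ac c unfolding m_def by auto
  have "take a w \<in> good_words r (Suc n - m)"
    using good_word_take[OF w'(1)] w' m unfolding good_words_def by (auto dest: in_set_takeD)
  moreover have "drop a (w @ [x]) \<in> bad_words r m"
    using ac c w' x unfolding bad_words_def m_def by (auto dest: in_set_dropD)
  moreover have "w @ [x] = take a w @ drop a (w @ [x])" using ac c w' by simp
  ultimately have "w @ [x] \<in> (\<lambda>(u, v). u @ v) ` (good_words r (Suc n - m) \<times> bad_words r m)"
    by (metis (no_types, lifting) case_prod_conv image_eqI mem_Sigma_iff)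
  with m show ?thesis by blast
qed

lemma card_good_words_Suc:
  "alphabet_size r * card (good_words r n) \<le>
     card (good_words r (Suc n)) + (\<Sum>m\<in>{1..Suc n}. card (good_words r (Suc n - m)) * card (bad_words r m))"
proof -
  let ?q = "alphabet_size r"
  let ?B = "\<lambda>m. (\<lambda>(u, v). u @ v) ` (good_words r (Suc n - m) \<times> bad_words r m)"
  have "inj_on (\<lambda>(w, x). w @ [x]) (good_words r n \<times> {0..<?q})"
    by (auto simp: inj_on_def)
  then have "card (good_words r n) * ?q = card ((\<lambda>(w, x). w @ [x]) ` (good_words r n \<times> {0..<?q}))"
    by (simp add: card_image card_cartesian_product)
  also have "\<dots> \<le> card (good_words r (Suc n) \<union> (\<Union>m\<in>{1..Suc n}. ?B m))"
  proof (rule card_mono)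
    show "finite (good_words r (Suc n) \<union> (\<Union>m\<in>{1..Suc n}. ?B m))"
      by (simp add: finite_good_words finite_bad_words)
    show "(\<lambda>(w, x). w @ [x]) ` (good_words r n \<times> {0..<?q}) \<subseteq>
        good_words r (Suc n) \<union> (\<Union>m\<in>{1..Suc n}. ?B m)"
    proof (rule image_subsetI)
      fix p assume "p \<in> good_words r n \<times> {0..<?q}"
      then obtain w x where "p = (w, x)" "w \<in> good_words r n" "x < ?q" by auto
      then show "(\<lambda>(w, x). w @ [x]) p \<in> good_words r (Suc n) \<union> (\<Union>m\<in>{1..Suc n}. ?B m)"
        using snoc_good_word[of w r n x] by simp
    qed
  qed
  also have "\<dots> \<le> card (good_words r (Suc n)) + card (\<Union>m\<in>{1..Suc n}. ?B m)"
    by (rule card_Un_le)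
  also have "card (\<Union>m\<in>{1..Suc n}. ?B m) \<le> (\<Sum>m\<in>{1..Suc n}. card (?B m))"
    by (rule card_UN_le) simp
  also have "\<dots> \<le> (\<Sum>m\<in>{1..Suc n}. card (good_words r (Suc n - m)) * card (bad_words r m))"
    by (intro sum_mono order.trans[OF card_image_le])
      (simp_all add: card_cartesian_product finite_good_words finite_bad_words)
  finally show ?thesis by (simp add: mult.commute)
qed

section \<open>Growth of the number of good words\<close>

lemma pow_self_le_fact: "real k ^ k \<le> 4 ^ k * fact k"
proof (induction k)
  case (Suc k)
  have "real (Suc k) ^ k \<le> 4 * real k ^ k"
  proof (cases "k = 0")
    case False
    have "(1 + 1 / real k) ^ k \<le> exp 1"
      using exp_ge_one_plus_x_over_n_power_n[where x = 1 and n = k] False by simp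
    also have "\<dots> \<le> 4" using exp_le by simp
    finally have "(1 + 1 / real k) ^ k \<le> 4" .
    moreover have "real (Suc k) ^ k = real k ^ k * (1 + 1 / real k) ^ k"
      using False by (simp add: power_mult_distrib[symmetric] field_simps)
    ultimately show ?thesis by (metis mult.commute mult_left_mono zero_le_power of_nat_0_le_iff)
  qed simp
  then have "real (Suc k) ^ Suc k \<le> real (Suc k) * (4 * (4 ^ k * fact k))"
    using Suc.IH by (simp add: mult_left_mono order.trans)
  then show ?case by (simp add: algebra_simps)
qed simp

lemma binomial_le_pow:
  assumes "m \<le> r * k"
  shows "real (m choose k) \<le> (4 * real r) ^ k"
proof -
  have "real (m choose k) * fact k \<le> real m ^ k"
    using binomial_fact_pow[of m k] by (metis of_nat_fact of_nat_le_iff of_nat_mult of_nat_power)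
  also have "\<dots> \<le> (real r * real k) ^ k" using assms
    by (intro power_mono) (simp_all flip: of_nat_mult)
  also have "\<dots> \<le> real r ^ k * (4 ^ k * fact k)"
    by (simp add: power_mult_distrib mult_left_mono pow_self_le_fact)
  finally have "real (m choose k) * fact k \<le> (4 * real r) ^ k * fact k"
    by (simp add: power_mult_distrib algebra_simps)
  then show ?thesis by simp
qed

lemma one_minus_pow_ge_half:
  assumes "0 < r"
  shows "1/2 \<le> (1 - 1 / (4 * real r)) ^ (2 * r)"
proof -
  have "1 + real (2 * r) * (- 1 / (4 * real r)) \<le> (1 + (- 1 / (4 * real r))) ^ (2 * r)"
    by (rule Bernoulli_inequality) (use assms in \<open>simp add: field_simps\<close>)
  moreover have "1 + real (2 * r) * (- 1 / (4 * real r)) = 1/2" using assms by (simp add: field_simps)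
  ultimately show ?thesis by simp
qed

text \<open>The \<open>m\<close>-th term of the recursion for the number of good words, relative to the growth
  rate \<open>q \<theta>\<close>.\<close>

lemma binomial_term_le:
  assumes r: "0 < r" and m: "1 \<le> m"
  defines "q \<equiv> real (alphabet_size r)" and "\<theta> \<equiv> 1 - 1 / (4 * real r)" and "L \<equiv> repeat_length r m"
  shows "real (m choose (2 * L)) * q ^ (m - L) / (q * \<theta>) ^ (m - 1) \<le> q * (1 / (16 * real r ^ 2)) ^ L"
proof (cases "2 * L \<le> m")
  case False
  then show ?thesis unfolding q_def by (simp add: binomial_eq_0)
next
  case Lm: True
  have L1: "1 \<le> L" using repeat_length_le_iff[OF r, of m 0] m unfolding L_def by simp
  have mL: "m \<le> 2 * r * L" using repeat_length_le_iff[OF r, of m L] unfolding L_def by simp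
  have q: "0 < q" unfolding q_def alphabet_size_def using r by simp
  have \<theta>: "0 < \<theta>" "\<theta> \<le> 1" unfolding \<theta>_def using r by (auto simp: field_simps)
  have split: "(q * \<theta>) ^ (m - 1) = q ^ (m - L) * (q ^ L / q) * \<theta> ^ (m - 1)"
  proof -
    have "m - 1 = (m - L) + (L - 1)" using Lm L1 by simp
    moreover have "q ^ (L - 1) = q ^ L / q" using L1 q by (simp add: power_diff)
    ultimately show ?thesis by (simp add: power_mult_distrib power_add)
  qed
  have "(1/2) ^ L \<le> \<theta> ^ m"
  proof -
    have "(1/2) ^ L \<le> (\<theta> ^ (2 * r)) ^ L"
      using one_minus_pow_ge_half[OF r] unfolding \<theta>_def by (intro power_mono) auto
    also have "\<dots> \<le> \<theta> ^ m" using \<theta> mL by (simp add: power_mult[symmetric] power_decreasing)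
    finally show ?thesis .
  qed
  also have "\<theta> ^ m \<le> \<theta> ^ (m - 1)" using \<theta> by (simp add: power_decreasing)
  finally have \<theta>_pow: "(1/2) ^ L \<le> \<theta> ^ (m - 1)" .
  have binom: "real (m choose (2 * L)) \<le> (16 * real r ^ 2) ^ L"
  proof -
    have "real (m choose (2 * L)) \<le> (4 * real r) ^ (2 * L)"
      using mL by (intro binomial_le_pow) (simp add: algebra_simps)
    also have "\<dots> = (16 * real r ^ 2) ^ L" by (simp add: power_mult power_mult_distrib)
    finally show ?thesis .
  qed
  have "real (m choose (2 * L)) * q ^ (m - L) / (q * \<theta>) ^ (m - 1)
      = real (m choose (2 * L)) * q / (q ^ L * \<theta> ^ (m - 1))"
    unfolding split using q \<theta> by (simp add: field_simps)
  also have "\<dots> \<le> (16 * real r ^ 2) ^ L * q / (q ^ L * (1/2) ^ L)"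
    using binom \<theta>_pow q \<theta> by (intro frac_le mult_right_mono mult_left_mono) auto
  also have "\<dots> = q * ((16 * real r ^ 2) ^ L / (q * (1/2)) ^ L)"
    by (simp only: power_mult_distrib) simp
  also have "\<dots> = q * ((16 * real r ^ 2) / (q * (1/2))) ^ L"
    by (simp only: power_divide)
  also have "(16 * real r ^ 2) / (q * (1/2)) = 1 / (16 * real r ^ 2)"
    unfolding q_def alphabet_size_def using r by (simp add: field_simps power2_eq_square power4_eq_xxxx)
  finally show ?thesis .
qed

lemma sum_power_le_double:
  fixes \<rho> :: real
  assumes "0 \<le> \<rho>" "\<rho> \<le> 1/2"
  shows "(\<Sum>L\<in>{1..M}. \<rho> ^ L) \<le> 2 * \<rho>"
proof -
  have "(\<Sum>L\<in>{1..M}. \<rho> ^ L) \<le> 2 * \<rho> - 2 * \<rho> ^ Suc M"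
  proof (induction M)
    case (Suc M)
    have "2 * \<rho> ^ Suc (Suc M) \<le> \<rho> ^ Suc M"
      using assms mult_right_mono[of "2 * \<rho>" 1 "\<rho> ^ Suc M"] by simp
    with Suc show ?case by simp
  qed simp
  moreover have "0 \<le> \<rho> ^ Suc M" using assms by simp
  ultimately show ?thesis by linarith
qed

text \<open>Each value \<open>L\<close> of \<open>repeat_length r m\<close> is taken by at most \<open>2 r\<close> values of \<open>m\<close>.\<close>

lemma sum_power_repeat_length_le:
  fixes \<rho> :: real
  assumes r: "0 < r" and \<rho>: "0 \<le> \<rho>" "\<rho> \<le> 1/2"
  shows "(\<Sum>m\<in>{1..N}. \<rho> ^ repeat_length r m) \<le> 4 * r * \<rho>"
proof -
  have blocks: "(\<Sum>m\<in>{1..2 * r * M}. \<rho> ^ repeat_length r m) \<le> 2 * r * (\<Sum>L\<in>{1..M}. \<rho> ^ L)" for M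
  proof (induction M)
    case (Suc M)
    let ?I = "{2 * r * M + 1..2 * r * M + 2 * r}"
    have "{1..2 * r * Suc M} = {1..2 * r * M} \<union> ?I" by auto
    then have "(\<Sum>m\<in>{1..2 * r * Suc M}. \<rho> ^ repeat_length r m)
        = (\<Sum>m\<in>{1..2 * r * M}. \<rho> ^ repeat_length r m) + (\<Sum>m\<in>?I. \<rho> ^ repeat_length r m)"
      by (simp add: sum.union_disjoint)
    also have "(\<Sum>m\<in>?I. \<rho> ^ repeat_length r m) \<le> (\<Sum>m\<in>?I. \<rho> ^ Suc M)"
    proof (rule sum_mono)
      fix m assume "m \<in> ?I"
      then have "Suc M \<le> repeat_length r m" using repeat_length_le_iff[OF r, of m M] by auto
      then show "\<rho> ^ repeat_length r m \<le> \<rho> ^ Suc M" using \<rho> by (intro power_decreasing) auto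
    qed
    finally show ?case using Suc.IH by (simp add: algebra_simps)
  qed simp
  have "(\<Sum>m\<in>{1..N}. \<rho> ^ repeat_length r m) \<le> (\<Sum>m\<in>{1..2 * r * N}. \<rho> ^ repeat_length r m)"
    using \<rho> r by (intro sum_mono2) auto
  also have "\<dots> \<le> 2 * r * (\<Sum>L\<in>{1..N}. \<rho> ^ L)" by (rule blocks)
  also have "\<dots> \<le> 2 * r * (2 * \<rho>)"
    using sum_power_le_double[OF \<rho>] by (intro mult_left_mono) auto
  finally show ?thesis by simp
qed

lemma sum_binomial_terms_le:
  assumes r: "0 < r"
  defines "q \<equiv> real (alphabet_size r)" and "\<beta> \<equiv> real (alphabet_size r) * (1 - 1 / (4 * real r))"
  shows "(\<Sum>m\<in>{1..N}. real (m choose (2 * repeat_length r m)) * q ^ (m - repeat_length r m)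
            / \<beta> ^ (m - 1)) \<le> q - \<beta>"
proof -
  define \<rho> where "\<rho> = 1 / (16 * real r ^ 2)"
  have "1 \<le> real r ^ 2" using r by simp
  then have \<rho>: "0 \<le> \<rho>" "\<rho> \<le> 1/2" unfolding \<rho>_def by (auto simp: divide_simps)
  have "(\<Sum>m\<in>{1..N}. real (m choose (2 * repeat_length r m)) * q ^ (m - repeat_length r m)
          / \<beta> ^ (m - 1)) \<le> (\<Sum>m\<in>{1..N}. q * \<rho> ^ repeat_length r m)"
    unfolding \<beta>_def q_def \<rho>_def using binomial_term_le[OF r] by (intro sum_mono) auto
  also have "\<dots> = q * (\<Sum>m\<in>{1..N}. \<rho> ^ repeat_length r m)" by (simp add: sum_distrib_left)
  also have "\<dots> \<le> q * (4 * r * \<rho>)" unfolding q_def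
    using sum_power_repeat_length_le[OF r \<rho>] by (intro mult_left_mono) auto
  also have "\<dots> = q - \<beta>" unfolding \<rho>_def \<beta>_def q_def using r
    by (simp add: field_simps power2_eq_square)
  finally show ?thesis .
qed

lemma iterated_growth:
  fixes g :: "nat \<Rightarrow> real"
  assumes "0 \<le> b" "\<And>k. k < n \<Longrightarrow> b * g k \<le> g (Suc k)" "j \<le> n"
  shows "b ^ (n - j) * g j \<le> g n"
  using assms(2,3)
proof (induction n)
  case (Suc n)
  show ?case
  proof (cases "j = Suc n")
    case False
    with Suc have IH: "b ^ (n - j) * g j \<le> g n" by simp
    have "b ^ (Suc n - j) * g j = b * (b ^ (n - j) * g j)"
      using False Suc.prems(2) by (simp add: Suc_diff_le)
    also have "\<dots> \<le> b * g n" using IH assms(1) by (rule mult_left_mono)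
    also have "\<dots> \<le> g (Suc n)" using Suc.prems(1) by simp
    finally show ?thesis .
  qed simp
qed simp

text \<open>By strong induction, the growth rate already established for shorter lengths bounds the
  good prefixes in front of every bad suffix of an extension.\<close>

lemma card_good_words_growth:
  assumes r: "0 < r"
  defines "\<beta> \<equiv> real (alphabet_size r) * (1 - 1 / (4 * real r))"
  shows "\<beta> * real (card (good_words r n)) \<le> real (card (good_words r (Suc n)))"
proof (induction n rule: less_induct)
  case (less n)
  define g where "g k = real (card (good_words r k))" for k
  define q where "q = real (alphabet_size r)"
  define b where "b m = real (m choose (2 * repeat_length r m)) * q ^ (m - repeat_length r m)" for m
  have \<beta>: "0 < \<beta>" unfolding \<beta>_def using r by (simp add: alphabet_size_def field_simps)
  have prefix: "g (Suc n - m) \<le> g n / \<beta> ^ (m - 1)" if m: "m \<in> {1..Suc n}" for m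
  proof -
    have "\<beta> ^ (n - (Suc n - m)) * g (Suc n - m) \<le> g n"
      using iterated_growth[of \<beta> n g "Suc n - m"] less \<beta> m unfolding g_def by force
    moreover have "n - (Suc n - m) = m - 1" using m by auto
    ultimately show ?thesis using \<beta> by (simp add: field_simps)
  qed
  have "q * g n \<le> g (Suc n) + (\<Sum>m\<in>{1..Suc n}. g (Suc n - m) * real (card (bad_words r m)))"
    using of_nat_mono[OF card_good_words_Suc[of r n]] unfolding g_def q_def
    by (simp only: of_nat_add of_nat_mult of_nat_sum)
  also have "(\<Sum>m\<in>{1..Suc n}. g (Suc n - m) * real (card (bad_words r m)))
      \<le> (\<Sum>m\<in>{1..Suc n}. g n / \<beta> ^ (m - 1) * b m)"
  proof (rule sum_mono)
    fix m assume m: "m \<in> {1..Suc n}"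
    have "real (card (bad_words r m)) \<le> b m"
      using of_nat_mono[OF card_bad_words_le[of r m]] unfolding b_def q_def by simp
    then show "g (Suc n - m) * real (card (bad_words r m)) \<le> g n / \<beta> ^ (m - 1) * b m"
      using prefix[OF m] by (intro mult_mono) (auto simp: g_def)
  qed
  also have "\<dots> = g n * (\<Sum>m\<in>{1..Suc n}. b m / \<beta> ^ (m - 1))"
    unfolding sum_distrib_left by (rule sum.cong) simp_all
  also have "\<dots> \<le> g n * (q - \<beta>)"
    using sum_binomial_terms_le[OF r, of "Suc n"] unfolding b_def q_def \<beta>_def g_def
    by (intro mult_left_mono) auto
  finally show ?case unfolding g_def by (simp add: algebra_simps)
qed

lemma good_words_nonempty:
  assumes r: "0 < r"
  shows "good_words r n \<noteq> {}"
proof -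
  have "0 < card (good_words r n)"
  proof (induction n)
    case 0
    have "[] \<in> good_words r 0" unfolding good_words_def good_word_def by simp
    then show ?case using finite_good_words card_gt_0_iff by blast
  next
    case (Suc n)
    have "0 < real (alphabet_size r) * (1 - 1 / (4 * real r))"
      using r by (simp add: alphabet_size_def field_simps)
    with Suc have "0 < real (alphabet_size r) * (1 - 1 / (4 * real r)) * real (card (good_words r n))"
      by simp
    also have "\<dots> \<le> real (card (good_words r (Suc n)))" by (rule card_good_words_growth[OF r])
    finally show ?case by simp
  qed
  then show ?thesis by auto
qed

section \<open>Infinite words\<close>

definition extendable :: "'a set \<Rightarrow> ('a list \<Rightarrow> bool) \<Rightarrow> 'a list \<Rightarrow> bool" where
  "extendable A P w \<longleftrightarrow>
     (\<forall>n\<ge>length w. \<exists>v. length v = n \<and> set v \<subseteq> A \<and> P v \<and> take (length w) v = w)"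

lemma extendableD:
  assumes "extendable A P w"
  shows "set w \<subseteq> A \<and> P w"
proof -
  obtain v where "length v = length w" "set v \<subseteq> A" "P v" "take (length w) v = w"
    using assms unfolding extendable_def by blast
  then show ?thesis by simp
qed

lemma extendable_snoc:
  assumes A: "finite A" and take: "\<And>w n. P w \<Longrightarrow> P (take n w)" and w: "extendable A P w"
  shows "\<exists>a\<in>A. extendable A P (w @ [a])"
proof (rule ccontr)
  assume "\<not> ?thesis"
  then have "\<forall>a\<in>A. \<exists>n. Suc (length w) \<le> n \<and> (\<forall>v. P v \<longrightarrow> set v \<subseteq> A \<longrightarrow> length v = n \<longrightarrow>
      take (Suc (length w)) v \<noteq> w @ [a])"
    unfolding extendable_def by auto
  then have "\<exists>len. \<forall>a\<in>A. Suc (length w) \<le> len a \<and> (\<forall>v. P v \<longrightarrow>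
      set v \<subseteq> A \<longrightarrow> length v = len a \<longrightarrow> take (Suc (length w)) v \<noteq> w @ [a])"
    by (rule bchoice)
  then obtain len where len: "\<And>a. a \<in> A \<Longrightarrow> Suc (length w) \<le> len a"
    "\<And>a v. a \<in> A \<Longrightarrow> P v \<Longrightarrow> set v \<subseteq> A \<Longrightarrow> length v = len a \<Longrightarrow>
      take (Suc (length w)) v \<noteq> w @ [a]"
    by blast
  define N where "N = Suc (length w) + (\<Sum>a\<in>A. len a)"
  have "length w \<le> N" unfolding N_def by simp
  then obtain v where v: "length v = N" "set v \<subseteq> A" "P v" "take (length w) v = w"
    using w unfolding extendable_def by blast
  define a where "a = v ! length w"
  have "length w < N" unfolding N_def by simp
  then have a: "a \<in> A" "take (Suc (length w)) v = w @ [a]"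
    using v unfolding a_def by (auto simp: take_Suc_conv_app_nth)
  have "len a \<le> (\<Sum>a\<in>A. len a)" using a(1) A by (intro member_le_sum) auto
  then have "length (take (len a) v) = len a" using v(1) unfolding N_def by simp
  moreover have "take (Suc (length w)) (take (len a) v) = w @ [a]"
    using a len(1)[OF a(1)] by (simp add: min_def)
  moreover have "P (take (len a) v)" using take v(3) .
  moreover have "set (take (len a) v) \<subseteq> A" using v(2) by (meson order.trans set_take_subset)
  ultimately show False using len(2)[OF a(1)] by blast
qed

lemma koenig_prefix_closed:
  assumes A: "finite A" and words: "\<And>n. \<exists>w. length w = n \<and> set w \<subseteq> A \<and> P w"
    and take: "\<And>w n. P w \<Longrightarrow> P (take n w)"
  shows "\<exists>f. (\<forall>i. f i \<in> A) \<and> (\<forall>n. P (map f [0..<n]))"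
proof -
  define grow where "grow w = w @ [SOME a. a \<in> A \<and> extendable A P (w @ [a])]" for w
  define ws where "ws n = (grow ^^ n) []" for n
  have ws: "extendable A P (ws n) \<and> length (ws n) = n" for n
  proof (induction n)
    case 0
    have "extendable A P []"
      unfolding extendable_def using words by auto
    then show ?case unfolding ws_def by simp
  next
    case (Suc n)
    then have "\<exists>a. a \<in> A \<and> extendable A P (ws n @ [a])"
      using extendable_snoc[of A P, OF A take] by blast
    then have "extendable A P (grow (ws n))" unfolding grow_def by (rule someI2_ex) simp
    with Suc show ?case unfolding ws_def grow_def by simp
  qed
  define f where "f i = ws (Suc i) ! i" for i
  have "ws n = map f [0..<n]" for n
  proof (induction n)
    case (Suc n)
    have "ws (Suc n) = ws n @ [f n]"
      using ws[of n] unfolding f_def ws_def by (simp add: grow_def nth_append)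
    with Suc show ?case by simp
  qed (simp add: ws_def)
  moreover have "f i \<in> A" for i
    using extendableD[of A P "ws (Suc i)"] ws[of "Suc i"] nth_mem unfolding f_def by fastforce
  ultimately show ?thesis using ws extendableD by metis
qed

lemma good_sequence_exists:
  assumes "0 < r"
  shows "\<exists>f. (\<forall>i. f i < alphabet_size r) \<and> (\<forall>n. good_word r (map f [0..<n]))"
proof -
  have "\<exists>w. length w = n \<and> set w \<subseteq> {0..<alphabet_size r} \<and> good_word r w" for n
    using good_words_nonempty[OF assms, of n] unfolding good_words_def by blast
  from koenig_prefix_closed[of "{0..<alphabet_size r}", OF _ this good_word_take]
  show ?thesis by auto
qed

lemma ED_substr_gt_if_good_sequence:
  fixes \<epsilon> :: real
  assumes r: "0 < r" and r\<epsilon>: "1 \<le> real r * \<epsilon>" and good: "\<And>n. good_word r (map f [0..<n])"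
    and ijk: "0 < i" "i < j" "j < k"
  defines "S \<equiv> \<lambda>i. f (i - 1)"
  shows "(1 - \<epsilon>) * real (k - i) < real (ED (substr S i j) (substr S j k))"
proof (rule ccontr)
  have substr: "substr S a b = map f [a - 1..<b - 1]" if "0 < a" for a b
  proof -
    have "[a..<b] = map Suc [a - 1..<b - 1]" using that by (cases b) (simp_all add: map_Suc_upt)
    then show ?thesis unfolding substr_def S_def by simp
  qed
  let ?xs = "substr S i j" and ?ys = "substr S j k"
  have xys: "?xs @ ?ys = drop (i - 1) (take (k - 1) (map f [0..<k - 1]))"
  proof -
    have "[i - 1..<k - 1] = [i - 1..<j - 1] @ [j - 1..<k - 1]"
      using upt_add_eq_append[of "i - 1" "j - 1" "k - j"] ijk by simp
    then show ?thesis using ijk by (simp add: substr drop_map)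
  qed
  have "length (?xs @ ?ys) = k - i" using ijk by (simp add: substr)
  moreover assume "\<not> ?thesis"
  ultimately have "real (ED ?xs ?ys) \<le> (1 - \<epsilon>) * real (length (?xs @ ?ys))" by simp
  then have "bad_word r (?xs @ ?ys)"
    unfolding bad_word_def by (rule ED_small_imp_has_repeat[OF r r\<epsilon>])
  moreover have "i - 1 < k - 1" "k - 1 \<le> length (map f [0..<k - 1])" using ijk by simp_all
  ultimately show False using good[of "k - 1"] unfolding good_word_def xys by blast
qed

lemma nat_ceiling_inverse_bounds:
  fixes \<epsilon> :: real
  assumes "0 < \<epsilon>" "\<epsilon> < 1"
  shows "1 / \<epsilon> \<le> real (nat \<lceil>1 / \<epsilon>\<rceil>)" "real (nat \<lceil>1 / \<epsilon>\<rceil>) \<le> 2 / \<epsilon>"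
proof -
  show "1 / \<epsilon> \<le> real (nat \<lceil>1 / \<epsilon>\<rceil>)" by linarith
  have "1 < 1 / \<epsilon>" using assms by simp
  moreover have "real (nat \<lceil>1 / \<epsilon>\<rceil>) \<le> 1 / \<epsilon> + 1"
    using assms of_int_ceiling_le_add_one[of "1 / \<epsilon>"] by simp
  ultimately show "real (nat \<lceil>1 / \<epsilon>\<rceil>) \<le> 2 / \<epsilon>" by (simp add: field_simps)
qed

lemma alphabet_size_bounds:
  fixes \<epsilon> :: real
  assumes "0 < \<epsilon>" "1 / \<epsilon> \<le> real r" "real r \<le> 2 / \<epsilon>"
  shows "512 / \<epsilon> ^ 4 \<le> real (alphabet_size r)" "real (alphabet_size r) \<le> 8192 / \<epsilon> ^ 4"
proof -
  have "(1 / \<epsilon>) ^ 4 \<le> real r ^ 4" "real r ^ 4 \<le> (2 / \<epsilon>) ^ 4"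
    using assms by (auto intro: power_mono)
  then show "512 / \<epsilon> ^ 4 \<le> real (alphabet_size r)" "real (alphabet_size r) \<le> 8192 / \<epsilon> ^ 4"
    unfolding alphabet_size_def by (simp_all add: power_divide)
qed

theorem lemma20:
  shows "\<exists>c C :: real. 0 < c \<and> 0 < C \<and>
    (\<forall>\<epsilon>::real. 0 < \<epsilon> \<and> \<epsilon> < 1 \<longrightarrow>
      (\<exists>(\<Sigma>::nat set) (S::nat \<Rightarrow> nat).
         finite \<Sigma> \<and>
         c / \<epsilon> ^ 4 \<le> real (card \<Sigma>) \<and> real (card \<Sigma>) \<le> C / \<epsilon> ^ 4 \<and>
         (\<forall>i\<ge>1. S i \<in> \<Sigma>) \<and>
         (\<forall>i j k. 0 < i \<and> i < j \<and> j < k \<longrightarrow>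
            real (ED (substr S i j) (substr S j k)) > (1 - \<epsilon>) * real (k - i))))"
proof (rule exI[of _ 512], rule exI[of _ 8192], intro conjI allI impI)
  fix \<epsilon> :: real assume \<epsilon>: "0 < \<epsilon> \<and> \<epsilon> < 1"
  define r where "r = nat \<lceil>1 / \<epsilon>\<rceil>"
  have r_bounds: "1 / \<epsilon> \<le> real r" "real r \<le> 2 / \<epsilon>"
    using nat_ceiling_inverse_bounds \<epsilon> unfolding r_def by auto
  have r: "0 < r" "1 \<le> real r * \<epsilon>"
    using r_bounds(1) \<epsilon> by (auto simp: field_simps intro: Nat.gr0I)
  obtain f where f: "\<And>i. f i < alphabet_size r" "\<And>n. good_word r (map f [0..<n])"
    using good_sequence_exists[OF r(1)] by blast
  show "\<exists>(\<Sigma>::nat set) (S::nat \<Rightarrow> nat). finite \<Sigma> \<and>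
      512 / \<epsilon> ^ 4 \<le> real (card \<Sigma>) \<and> real (card \<Sigma>) \<le> 8192 / \<epsilon> ^ 4 \<and>
      (\<forall>i\<ge>1. S i \<in> \<Sigma>) \<and>
      (\<forall>i j k. 0 < i \<and> i < j \<and> j < k \<longrightarrow>
         real (ED (substr S i j) (substr S j k)) > (1 - \<epsilon>) * real (k - i))"
    using alphabet_size_bounds[OF _ r_bounds] \<epsilon> f ED_substr_gt_if_good_sequence[OF r f(2)]
    by (intro exI[of _ "{0..<alphabet_size r}"] exI[of _ "\<lambda>i. f (i - 1)"]) auto
qed simp_all

end
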